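(* The Cesàro operator $\mathcal C: VH(\mathbb D)\to VH(\mathbb D)$ is not power bounded, not mean ergodic and not supercyclic.
   Context: $\mathbb D$ is the open unit disc. Define $v(z)=1$ if $|z|\le 1-1/e$ and $v(z)=(-\log(1-|z|))^{-1}$ if $1-1/e\le|z|<1$, $v_k=v^k$, $H^\infty_{v_k}=\{f \text{ analytic on }\mathbb D:\sup_{z\in\mathbb D}v_k(z)|f(z)|<\infty\}$ normed by this sup, and $VH(\mathbb D)=\bigcup_kH^\infty_{v_k}$ with the finest locally convex topology making all inclusions continuous. The Cesàro operator is $\mathcal C f(z)=\frac1z\int_0^z\frac{f(\zeta)}{1-\zeta}\,d\zeta$ for $z\neq0$, $\mathcal Cf(0)=f(0)$. For a locally convex Hausdorff space $X$ and continuous linear $T:X\to X$: $T$ is power bounded if $\{T^n:n\in\mathbb N_0\}$ is equicontinuous; $T$ is mean ergodic if the Cesàro means $T_{[n]}=\frac1n\sum_{m=1}^nT^m$ converge pointwise on $X$ (i.e. $(T_{[n]}x)_n$ converges in $X$ for every $x\in X$); $T$ is supercyclic if there exists $z\in X$ with $\{\lambda T^nz:\lambda\in\mathbb C,n\in\mathbb N_0\}$ dense in $X$. *)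

theory Defs
  imports "HOL-Complex_Analysis.Complex_Analysis"
begin

text \<open>Functions on the disc are represented as maps complex \<Rightarrow> complex that
vanish outside the open unit disc (so that equality of elements is equality
of functions on the disc).\<close>

definition vw :: "complex \<Rightarrow> real" where
  "vw z = (if norm z \<le> 1 - 1 / exp 1 then 1 else 1 / (- ln (1 - norm z)))"

definition in_Hvk :: "nat \<Rightarrow> (complex \<Rightarrow> complex) \<Rightarrow> bool" where
  "in_Hvk k f \<longleftrightarrow> f holomorphic_on ball 0 1 \<and> (\<forall>z. z \<notin> ball 0 1 \<longrightarrow> f z = 0)
     \<and> (\<exists>M. \<forall>z\<in>ball 0 1. vw z ^ k * norm (f z) \<le> M)"

definition norm_Hvk :: "nat \<Rightarrow> (complex \<Rightarrow> complex) \<Rightarrow> real" where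
  "norm_Hvk k f = (SUP z\<in>ball 0 1. vw z ^ k * norm (f z))"

definition VH :: "(complex \<Rightarrow> complex) set" where
  "VH = {f. \<exists>k. in_Hvk k f}"

text \<open>Seminorms on VH that are continuous for the inductive limit topology:
exactly those whose restriction to every step space is continuous.\<close>
definition VH_cont_seminorm :: "((complex \<Rightarrow> complex) \<Rightarrow> real) \<Rightarrow> bool" where
  "VH_cont_seminorm p \<longleftrightarrow>
     (\<forall>f\<in>VH. \<forall>g\<in>VH. p (\<lambda>z. f z + g z) \<le> p f + p g) \<and>
     (\<forall>f\<in>VH. \<forall>c::complex. p (\<lambda>z. c * f z) = norm c * p f) \<and>
     (\<forall>k. \<exists>C. \<forall>f. in_Hvk k f \<longrightarrow> p f \<le> C * norm_Hvk k f)"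

text \<open>The finest locally convex topology on VH making all inclusions continuous.\<close>
definition VH_top :: "(complex \<Rightarrow> complex) topology" where
  "VH_top = topology (\<lambda>U. U \<subseteq> VH \<and> (\<forall>x\<in>U. \<exists>p e. VH_cont_seminorm p \<and> e > 0 \<and>
       {y\<in>VH. p (\<lambda>z. y z - x z) < e} \<subseteq> U))"

definition cesaro :: "(complex \<Rightarrow> complex) \<Rightarrow> (complex \<Rightarrow> complex)" where
  "cesaro f = (\<lambda>z. if z \<in> ball 0 1 then
      (if z = 0 then f 0 else (1 / z) * contour_integral (linepath 0 z) (\<lambda>\<zeta>. f \<zeta> / (1 - \<zeta>)))
     else 0)"

definition power_bounded_VH :: "((complex \<Rightarrow> complex) \<Rightarrow> (complex \<Rightarrow> complex)) \<Rightarrow> bool" where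
  "power_bounded_VH T \<longleftrightarrow> (\<forall>V. openin VH_top V \<and> (\<lambda>_. 0) \<in> V \<longrightarrow>
     (\<exists>U. openin VH_top U \<and> (\<lambda>_. 0) \<in> U \<and> (\<forall>n::nat. \<forall>f\<in>U. (T ^^ n) f \<in> V)))"

definition cesaro_mean :: "((complex \<Rightarrow> complex) \<Rightarrow> (complex \<Rightarrow> complex)) \<Rightarrow> nat \<Rightarrow>
    (complex \<Rightarrow> complex) \<Rightarrow> (complex \<Rightarrow> complex)" where
  "cesaro_mean T n f = (\<lambda>z. (\<Sum>m=1..n. (T ^^ m) f z) / of_nat n)"

definition mean_ergodic_VH :: "((complex \<Rightarrow> complex) \<Rightarrow> (complex \<Rightarrow> complex)) \<Rightarrow> bool" where
  "mean_ergodic_VH T \<longleftrightarrow> (\<forall>f\<in>VH. \<exists>g. limitin VH_top (\<lambda>n. cesaro_mean T n f) g sequentially)"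

definition supercyclic_VH :: "((complex \<Rightarrow> complex) \<Rightarrow> (complex \<Rightarrow> complex)) \<Rightarrow> bool" where
  "supercyclic_VH T \<longleftrightarrow> (\<exists>z\<in>VH.
     VH_top closure_of {(\<lambda>w. c * (T ^^ n) z w) | c n. (c::complex) \<in> UNIV \<and> (n::nat) \<in> UNIV} = VH)"

end

theory Submission
  imports Defs
begin

text \<open>The Cesaro operator \<open>C\<close> fixes \<open>f(0)\<close> and halves \<open>f(0) - f'(0)\<close>, and along the
  radius \<open>[0,1)\<close> it is a positive averaging operator:
  \<open>Re (C f)(x) = (1/x) \<integral>\<^sub>0\<^sup>x Re f(t) / (1 - t) dt\<close>.  Starting from a constant \<open>c \<ge> 0\<close> this gives
  \<open>(C\<^sup>n c)(x) \<ge> c (-log(1 - x))\<^sup>n / n!\<close>, increasing in \<open>n\<close>.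

  Power boundedness fails for the continuous seminorm \<open>sup (1 - |z|)\<^sup>1\<^sup>/\<^sup>4 |f(z)|\<close>, which is at
  least \<open>c (4/e)\<^sup>n\<close> on \<open>C\<^sup>n c\<close>, as seen at the point where \<open>-log(1 - x) = 4n\<close>.  The Cesaro means of
  \<open>1\<close> eventually exceed \<open>(-log(1 - x))\<^sup>k\<^sup>+\<^sup>1 / (2 (k+1)!)\<close> at \<open>x\<close>, a growth no element of
  \<open>H\<^sub>v\<^sub>k\<close> can follow, so they do not converge.  Finally \<open>|f(0)| + |f(0) - f'(0)|\<close> is a continuous
  seminorm for which every scaled orbit \<open>\<lambda> C\<^sup>n z\<close> stays away from a function with \<open>f(0) = 1\<close>
  and large \<open>f(0) - f'(0)\<close>, so no orbit is supercyclic.\<close>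

section \<open>The Cesaro operator on holomorphic functions\<close>

lemma holomorphic_convex_linepath_primitive:
  assumes holf: "f holomorphic_on S" and S: "convex S" "open S" and a: "a \<in> S" and x: "x \<in> S"
  shows "((\<lambda>x. contour_integral (linepath a x) f) has_field_derivative f x) (at x)"
proof -
  have "((\<lambda>x. contour_integral (linepath a x) f) has_field_derivative f x) (at x within S)"
  proof (rule triangle_contour_integrals_convex_primitive[OF holomorphic_on_imp_continuous_on[OF holf] a S(1) x])
    fix b c assume "b \<in> S" "c \<in> S"
    then have "(f has_contour_integral 0) (linepath a b +++ linepath b c +++ linepath c a)"
      using a S(1) by (intro Cauchy_theorem_convex_simple[OF holf])
        (auto simp: path_image_join convex_contains_segment)
    then show "contour_integral (linepath a b) f + contour_integral (linepath b c) f +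
        contour_integral (linepath c a) f = 0"
      by (rule has_chain_integral_chain_integral3)
  qed
  then show ?thesis using at_within_open[OF x S(2)] by simp
qed

lemma deriv_0_of_ident_times_primitive:
  assumes holG: "G holomorphic_on S" and holh: "h holomorphic_on S" and S: "open S" "0 \<in> S"
    and dzG: "\<And>w. w \<in> S \<Longrightarrow> ((\<lambda>z. z * G z) has_field_derivative h w) (at w)"
  shows "deriv G 0 = deriv h 0 / 2"
proof -
  have holdG: "deriv G holomorphic_on S"
    using holG S(1) by (rule holomorphic_deriv)
  have product_rule: "G w + w * deriv G w = h w" if w: "w \<in> S" for w
  proof -
    have "((\<lambda>z. z * G z) has_field_derivative G w + w * deriv G w) (at w)"
      using holomorphic_derivI[OF holG S(1) w] by (auto intro!: derivative_eq_intros)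
    then show ?thesis using dzG[OF w] DERIV_unique by blast
  qed
  have "deriv G 0 = deriv (\<lambda>w. h w - w * deriv G w) 0"
    using holG holh holdG S product_rule
    by (intro complex_derivative_transform_within_open[where s = S])
      (auto intro!: holomorphic_intros simp: algebra_simps)
  also have "\<dots> = deriv h 0 - deriv G 0"
    using holomorphic_derivI[OF holh S] holomorphic_derivI[OF holdG S]
    by (intro DERIV_imp_deriv) (auto intro!: derivative_eq_intros)
  finally show ?thesis by (simp add: field_simps)
qed

lemma cesaro_0 [simp]: "cesaro f 0 = f 0"
  by (simp add: cesaro_def)

lemma times_cesaro_eq_integral:
  assumes "z \<in> ball 0 1"
  shows "z * cesaro f z = contour_integral (linepath 0 z) (\<lambda>\<zeta>. f \<zeta> / (1 - \<zeta>))"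
  using assms by (cases "z = 0") (auto simp: cesaro_def)

lemma cesaro_integrand_primitive:
  assumes "f holomorphic_on ball 0 1" "z \<in> ball 0 1"
  shows "((\<lambda>x. contour_integral (linepath 0 x) (\<lambda>\<zeta>. f \<zeta> / (1 - \<zeta>))) has_field_derivative
           f z / (1 - z)) (at z)"
  using assms
  by (intro holomorphic_convex_linepath_primitive[where S = "ball 0 1"] holomorphic_intros) auto

lemma cesaro_holomorphic:
  assumes holf: "f holomorphic_on ball 0 1"
  shows "cesaro f holomorphic_on ball 0 1"
proof -
  define F where "F = (\<lambda>x. contour_integral (linepath 0 x) (\<lambda>\<zeta>. f \<zeta> / (1 - \<zeta>)))"
  have dF: "(F has_field_derivative f z / (1 - z)) (at z)" if "z \<in> ball 0 1" for z
    unfolding F_def using holf that by (rule cesaro_integrand_primitive)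
  then have "F holomorphic_on ball 0 1"
    using holomorphic_on_open by blast
  then have hol: "(\<lambda>z. if z = 0 then deriv F 0 else (F z - F 0) / (z - 0)) holomorphic_on ball 0 1"
    by (rule pole_lemma) auto
  have "deriv F 0 = f 0"
    using DERIV_imp_deriv[OF dF[of 0]] by simp
  then show ?thesis
    by (intro holomorphic_transform[OF hol]) (auto simp: cesaro_def F_def field_simps)
qed

lemma deriv_cesaro_0:
  assumes holf: "f holomorphic_on ball 0 1"
  shows "deriv (cesaro f) 0 = (f 0 + deriv f 0) / 2"
proof -
  have "deriv (cesaro f) 0 = deriv (\<lambda>\<zeta>. f \<zeta> / (1 - \<zeta>)) 0 / 2"
  proof (rule deriv_0_of_ident_times_primitive)
    show "cesaro f holomorphic_on ball 0 1" "(\<lambda>\<zeta>. f \<zeta> / (1 - \<zeta>)) holomorphic_on ball 0 1"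
      using holf by (auto intro!: cesaro_holomorphic holomorphic_intros)
    fix w :: complex assume w: "w \<in> ball 0 1"
    show "((\<lambda>z. z * cesaro f z) has_field_derivative f w / (1 - w)) (at w)"
      using cesaro_integrand_primitive[OF holf w] w
      by (rule has_field_derivative_transform_within_open[OF _ open_ball])
        (simp add: times_cesaro_eq_integral)
  qed auto
  also have "deriv (\<lambda>\<zeta>. f \<zeta> / (1 - \<zeta>)) 0 = deriv f 0 + f 0"
    using holomorphic_derivI[OF holf open_ball, of 0]
    by (intro DERIV_imp_deriv) (auto intro!: derivative_eq_intros)
  finally show ?thesis by (simp add: add.commute)
qed

lemma cesaro_iter_holomorphic:
  "f holomorphic_on ball 0 1 \<Longrightarrow> (cesaro ^^ n) f holomorphic_on ball 0 1"
  by (induction n) (auto intro: cesaro_holomorphic)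

lemma cesaro_iter_0: "(cesaro ^^ n) f 0 = f 0"
  by (induction n) auto

lemma cesaro_iter_deriv_0:
  assumes "f holomorphic_on ball 0 1"
  shows "(cesaro ^^ n) f 0 - deriv ((cesaro ^^ n) f) 0 = (f 0 - deriv f 0) / 2 ^ n"
proof (induction n)
  case (Suc n)
  have "(cesaro ^^ Suc n) f 0 - deriv ((cesaro ^^ Suc n) f) 0
      = ((cesaro ^^ n) f 0 - deriv ((cesaro ^^ n) f) 0) / 2"
    using deriv_cesaro_0[OF cesaro_iter_holomorphic[OF assms, of n]]
    by (simp add: field_simps)
  then show ?case
    using Suc.IH by simp
qed simp

section \<open>Iterates of constants along the radius\<close>

lemma Re_cesaro_of_real_has_integral:
  assumes contf: "continuous_on (ball 0 1) f" and x: "0 < x" "x < 1"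
  obtains I where "((\<lambda>t. Re (f (of_real t)) / (1 - t)) has_integral I) {0..x}"
    and "Re (cesaro f (of_real x)) = I / x"
proof -
  let ?h = "\<lambda>\<zeta>. f \<zeta> / (1 - \<zeta>)"
  let ?I = "contour_integral (linepath 0 (of_real x)) ?h"
  have "closed_segment 0 (complex_of_real x) \<subseteq> ball 0 1"
    using x by (intro convex_contains_segment[THEN iffD1, OF convex_ball, rule_format]) auto
  moreover have "continuous_on (ball 0 1) ?h"
    using contf by (intro continuous_intros) auto
  ultimately have "?h contour_integrable_on linepath 0 (of_real x)"
    by (intro contour_integrable_continuous_linepath) (rule continuous_on_subset)
  then have "((\<lambda>t. ?h (of_real t)) has_integral ?I) {0..x}"
    using x has_contour_integral_linepath_Reals_iff[of 0 x ?h ?I]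
    by (auto dest: has_contour_integral_integral)
  then have "((\<lambda>t. Re (?h (of_real t))) has_integral Re ?I) {0..x}"
    by (rule has_integral_Re)
  moreover have "Re (?h (of_real t)) = Re (f (of_real t)) / (1 - t)" for t
    by (metis Re_divide_of_real of_real_1 of_real_diff)
  moreover have "Re (cesaro f (of_real x)) = Re ?I / x"
    using x by (simp add: cesaro_def)
  ultimately show ?thesis
    using that by auto
qed

lemma Re_cesaro_of_real_mono:
  assumes contf: "continuous_on (ball 0 1) f" and contg: "continuous_on (ball 0 1) g"
    and le: "\<And>t. 0 \<le> t \<Longrightarrow> t < 1 \<Longrightarrow> Re (g (of_real t)) \<le> Re (f (of_real t))"
    and x: "0 \<le> x" "x < 1"
  shows "Re (cesaro g (of_real x)) \<le> Re (cesaro f (of_real x))"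
proof (cases "x = 0")
  case True
  then show ?thesis using le[of 0] by simp
next
  case False
  then have x0: "0 < x" using x by auto
  obtain I where I: "((\<lambda>t. Re (f (of_real t)) / (1 - t)) has_integral I) {0..x}"
      "Re (cesaro f (of_real x)) = I / x"
    using Re_cesaro_of_real_has_integral[OF contf x0 x(2)] .
  obtain J where J: "((\<lambda>t. Re (g (of_real t)) / (1 - t)) has_integral J) {0..x}"
      "Re (cesaro g (of_real x)) = J / x"
    using Re_cesaro_of_real_has_integral[OF contg x0 x(2)] .
  have "J \<le> I"
    using x le by (intro has_integral_le[OF J(1) I(1)] divide_right_mono) auto
  then show ?thesis
    using I(2) J(2) x0 by (simp add: divide_right_mono)
qed

lemma Re_cesaro_of_real_ge_integral:
  assumes contg: "continuous_on (ball 0 1) g" and x: "0 < x" "x < 1"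
    and J: "((\<lambda>t. \<phi> t / (1 - t)) has_integral J) {0..x}" and "0 \<le> J"
    and le: "\<And>t. 0 \<le> t \<Longrightarrow> t \<le> x \<Longrightarrow> \<phi> t \<le> Re (g (of_real t))"
  shows "J \<le> Re (cesaro g (of_real x))"
proof -
  obtain I where I: "((\<lambda>t. Re (g (of_real t)) / (1 - t)) has_integral I) {0..x}"
      "Re (cesaro g (of_real x)) = I / x"
    using Re_cesaro_of_real_has_integral[OF contg x] .
  have "J \<le> I"
    using x le by (intro has_integral_le[OF J I(1)] divide_right_mono) auto
  also have "I \<le> I / x"
    using x \<open>J \<le> I\<close> \<open>0 \<le> J\<close> by (simp add: le_divide_eq mult_left_le)
  finally show ?thesis
    using I(2) by simp
qed

definition disc_affine :: "complex \<Rightarrow> complex \<Rightarrow> complex \<Rightarrow> complex" where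
  "disc_affine a b = (\<lambda>z. if z \<in> ball 0 1 then a + b * z else 0)"

abbreviation disc_const :: "real \<Rightarrow> complex \<Rightarrow> complex" where
  "disc_const c \<equiv> disc_affine (of_real c) 0"

lemma disc_affine_holomorphic: "disc_affine a b holomorphic_on ball 0 1"
  by (rule holomorphic_transform[of "\<lambda>z. a + b * z"]) (auto simp: disc_affine_def intro!: holomorphic_intros)

lemma deriv_disc_affine_0: "deriv (disc_affine a b) 0 = b"
proof -
  have "deriv (disc_affine a b) 0 = deriv (\<lambda>z. a + b * z) 0"
    by (rule complex_derivative_transform_within_open[OF disc_affine_holomorphic _ open_ball])
      (auto simp: disc_affine_def intro!: holomorphic_intros)
  also have "\<dots> = b"
    by (rule DERIV_imp_deriv) (auto intro!: derivative_eq_intros)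
  finally show ?thesis .
qed

lemma continuous_on_cesaro_iter_disc_const:
  "continuous_on (ball 0 1) ((cesaro ^^ n) (disc_const c))"
  by (intro holomorphic_on_imp_continuous_on cesaro_iter_holomorphic disc_affine_holomorphic)

lemma has_integral_neg_ln_power:
  fixes x :: real
  assumes x: "0 \<le> x" "x < 1"
  shows "((\<lambda>t. (- ln (1 - t)) ^ n / fact n / (1 - t)) has_integral
           (- ln (1 - x)) ^ Suc n / fact (Suc n)) {0..x}"
proof -
  have "((\<lambda>t. (- ln (1 - t)) ^ Suc n / fact (Suc n)) has_real_derivative
           (- ln (1 - t)) ^ n / fact n / (1 - t)) (at t within {0..x})" if t: "t \<in> {0..x}" for t
  proof -
    have "((\<lambda>t. - ln (1 - t)) has_real_derivative 1 / (1 - t)) (at t within {0..x})"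
      using t x by (auto intro!: derivative_eq_intros)
    from DERIV_cdivide[OF DERIV_power[OF this, of "Suc n"], of "fact (Suc n)"]
    show ?thesis
      by (rule DERIV_cong) simp
  qed
  then have "((\<lambda>t. (- ln (1 - t)) ^ n / fact n / (1 - t)) has_integral
           (- ln (1 - x)) ^ Suc n / fact (Suc n) - (- ln (1 - 0)) ^ Suc n / fact (Suc n)) {0..x}"
    using x by (intro fundamental_theorem_of_calculus)
      (auto simp: has_real_derivative_iff_has_vector_derivative)
  then show ?thesis by simp
qed

lemma Re_cesaro_iter_disc_const_ge:
  assumes c: "0 \<le> c" and x: "0 \<le> x" "x < 1"
  shows "c * (- ln (1 - x)) ^ n / fact n \<le> Re ((cesaro ^^ n) (disc_const c) (of_real x))"
  using x
proof (induction n arbitrary: x)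
  case 0
  then show ?case by (simp add: disc_affine_def)
next
  case (Suc n)
  show ?case
  proof (cases "x = 0")
    case True
    then show ?thesis using c by (simp add: cesaro_iter_0 disc_affine_def)
  next
    case False
    have J: "((\<lambda>t. c * (- ln (1 - t)) ^ n / fact n / (1 - t)) has_integral
        c * (- ln (1 - x)) ^ Suc n / fact (Suc n)) {0..x}"
      using has_integral_mult_right[OF has_integral_neg_ln_power[OF Suc.prems], of c] by simp
    have "0 \<le> - ln (1 - x)"
      using Suc.prems by simp
    then have "0 \<le> c * (- ln (1 - x)) ^ Suc n / fact (Suc n)"
      using c by (intro divide_nonneg_pos mult_nonneg_nonneg zero_le_power) auto
    then have "c * (- ln (1 - x)) ^ Suc n / fact (Suc n) \<le> Re (cesaro ((cesaro ^^ n) (disc_const c)) (of_real x))"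
      using False Suc.prems Suc.IH
      by (intro Re_cesaro_of_real_ge_integral[OF continuous_on_cesaro_iter_disc_const _ _ J]) auto
    then show ?thesis
      by simp
  qed
qed

lemma Re_cesaro_disc_const_ge:
  assumes c: "0 \<le> c" and x: "0 \<le> x" "x < 1"
  shows "c \<le> Re (cesaro (disc_const c) (of_real x))"
proof (cases "x = 0")
  case True
  then show ?thesis by (simp add: disc_affine_def)
next
  case False
  then have x0: "0 < x" using x by auto
  obtain I where I: "((\<lambda>t. Re (disc_const c (of_real t)) / (1 - t)) has_integral I) {0..x}"
      "Re (cesaro (disc_const c) (of_real x)) = I / x"
    using Re_cesaro_of_real_has_integral[OF holomorphic_on_imp_continuous_on[OF disc_affine_holomorphic] x0 x(2)] .
  have const: "((\<lambda>t. c) has_integral x * c) {0..x}"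
    using has_integral_const_real[of c 0 x] x0 by simp
  have "x * c \<le> I"
  proof (rule has_integral_le[OF const I(1)])
    fix t assume "t \<in> {0..x}"
    then show "c \<le> Re (disc_const c (of_real t)) / (1 - t)"
      using c x by (simp add: disc_affine_def le_divide_eq mult_left_le)
  qed
  then show ?thesis
    using I(2) x0 by (simp add: le_divide_eq mult.commute)
qed

lemma Re_cesaro_iter_disc_const_mono:
  assumes c: "0 \<le> c" and x: "0 \<le> x" "x < 1" and "n \<le> m"
  shows "Re ((cesaro ^^ n) (disc_const c) (of_real x)) \<le> Re ((cesaro ^^ m) (disc_const c) (of_real x))"
proof -
  have step: "Re ((cesaro ^^ k) (disc_const c) (of_real y)) \<le> Re ((cesaro ^^ Suc k) (disc_const c) (of_real y))"
    if "0 \<le> y" "y < 1" for k y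
    using that
  proof (induction k arbitrary: y)
    case 0
    have "Re (disc_const c (of_real y)) = c"
      using 0 by (simp add: disc_affine_def)
    then show ?case
      using Re_cesaro_disc_const_ge[OF c 0] by simp
  next
    case (Suc k)
    show ?case
      using Re_cesaro_of_real_mono[OF continuous_on_cesaro_iter_disc_const[of "Suc k"]
          continuous_on_cesaro_iter_disc_const[of k] Suc.IH Suc.prems]
      by simp
  qed
  show ?thesis
    by (rule lift_Suc_mono_le[of "\<lambda>k. Re ((cesaro ^^ k) (disc_const c) (of_real x))", OF step[OF x]])
      (rule \<open>n \<le> m\<close>)
qed

lemma Re_cesaro_mean_disc_const_ge:
  assumes x: "0 \<le> x" "x < 1" and N: "1 \<le> N" and n: "2 * N \<le> n"
  shows "(- ln (1 - x)) ^ N / fact N / 2 \<le> Re (cesaro_mean cesaro n (disc_const 1) (of_real x))"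
proof -
  define A where "A = (- ln (1 - x)) ^ N / fact N"
  define a where "a = (\<lambda>m. Re ((cesaro ^^ m) (disc_const 1) (of_real x)))"
  have "0 \<le> - ln (1 - x)"
    using x by simp
  then have A: "0 \<le> A"
    unfolding A_def by simp
  have a_nonneg: "0 \<le> a m" for m
  proof -
    have "0 \<le> 1 * (- ln (1 - x)) ^ m / fact m"
      using \<open>0 \<le> - ln (1 - x)\<close> by simp
    also have "\<dots> \<le> a m"
      unfolding a_def using x by (intro Re_cesaro_iter_disc_const_ge) auto
    finally show ?thesis .
  qed
  have A_le: "A \<le> a m" if "N \<le> m" for m
    using Re_cesaro_iter_disc_const_ge[of 1 x N] Re_cesaro_iter_disc_const_mono[of 1 x N m] x that
    unfolding A_def a_def by simp
  have "real n / 2 * A \<le> real (Suc n - N) * A"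
    using n A by (intro mult_right_mono) auto
  also have "\<dots> = (\<Sum>m=N..n. A)"
    by simp
  also have "\<dots> \<le> (\<Sum>m=N..n. a m)"
    using A_le by (intro sum_mono) auto
  also have "\<dots> \<le> (\<Sum>m=1..n. a m)"
    using N a_nonneg by (intro sum_mono2) auto
  finally have "A / 2 \<le> (\<Sum>m=1..n. a m) / real n"
    using n N by (simp add: field_simps)
  also have "\<dots> = Re (cesaro_mean cesaro n (disc_const 1) (of_real x))"
    unfolding cesaro_mean_def a_def by (simp add: Re_divide_of_nat)
  finally show ?thesis
    unfolding A_def .
qed

section \<open>The weight and the step spaces\<close>

lemma neg_ln_gt_1:
  fixes r :: real
  assumes "1 - 1 / exp 1 < r" "r < 1"
  shows "1 < - ln (1 - r)"
proof -
  have "1 - r < exp (- 1)"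
    using assms(1) by (simp add: exp_minus inverse_eq_divide)
  then have "ln (1 - r) < ln (exp (- 1))"
    using assms(2) by (subst ln_less_cancel_iff) auto
  then show ?thesis by simp
qed

lemma vw_pos_le_1:
  assumes z: "z \<in> ball 0 1"
  shows "0 < vw z" "vw z \<le> 1"
proof -
  have "0 < vw z \<and> vw z \<le> 1"
  proof (cases "norm z \<le> 1 - 1 / exp 1")
    case False
    define L where "L = - ln (1 - norm z)"
    have "1 < L"
      unfolding L_def using z False by (intro neg_ln_gt_1) auto
    moreover have "vw z = 1 / L"
      using False by (simp add: vw_def L_def)
    ultimately show ?thesis by simp
  qed (simp add: vw_def)
  then show "0 < vw z" "vw z \<le> 1" by auto
qed

lemma vw_eq_1:
  assumes "norm z \<le> 1 / 2"
  shows "vw z = 1"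
proof -
  have "1 / exp 1 \<le> (1 / 2 :: real)"
    using exp_ge_add_one_self[of 1] by (simp add: field_simps)
  then have "norm z \<le> 1 - 1 / exp 1"
    using assms by linarith
  then show ?thesis by (simp add: vw_def)
qed

lemma in_Hvk_mono:
  assumes f: "in_Hvk k f" and "k \<le> j"
  shows "in_Hvk j f"
proof -
  obtain M where M: "\<forall>z\<in>ball 0 1. vw z ^ k * norm (f z) \<le> M"
    using f unfolding in_Hvk_def by blast
  have "vw z ^ j * norm (f z) \<le> M" if z: "z \<in> ball 0 1" for z
  proof -
    have "vw z ^ j \<le> vw z ^ k"
      using vw_pos_le_1[OF z] \<open>k \<le> j\<close> by (intro power_decreasing) auto
    then show ?thesis
      using M z by (meson mult_right_mono norm_ge_zero order_trans)
  qed
  then show ?thesis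
    using f unfolding in_Hvk_def by blast
qed

lemma in_Hvk_lincomb:
  assumes f: "in_Hvk k f" and g: "in_Hvk k g"
  shows "in_Hvk k (\<lambda>z. a * f z + b * g z)"
proof -
  obtain M where M: "\<forall>z\<in>ball 0 1. vw z ^ k * norm (f z) \<le> M"
    using f unfolding in_Hvk_def by blast
  obtain N where N: "\<forall>z\<in>ball 0 1. vw z ^ k * norm (g z) \<le> N"
    using g unfolding in_Hvk_def by blast
  have "vw z ^ k * norm (a * f z + b * g z) \<le> norm a * M + norm b * N" if z: "z \<in> ball 0 1" for z
  proof -
    have vz: "0 \<le> vw z ^ k"
      using vw_pos_le_1[OF z] by simp
    have "vw z ^ k * norm (a * f z + b * g z) \<le> vw z ^ k * (norm a * norm (f z) + norm b * norm (g z))"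
      using vz by (intro mult_left_mono) (auto intro: order_trans[OF norm_triangle_ineq] simp: norm_mult)
    also have "\<dots> = norm a * (vw z ^ k * norm (f z)) + norm b * (vw z ^ k * norm (g z))"
      by (simp add: algebra_simps)
    also have "\<dots> \<le> norm a * M + norm b * N"
      using M N z by (intro add_mono mult_left_mono) auto
    finally show ?thesis .
  qed
  then show ?thesis
    using f g unfolding in_Hvk_def
    by (intro conjI exI[of _ "norm a * M + norm b * N"]) (auto intro!: holomorphic_intros)
qed

lemma VH_lincomb:
  assumes "f \<in> VH" "g \<in> VH"
  shows "(\<lambda>z. a * f z + b * g z) \<in> VH"
proof -
  obtain k j where "in_Hvk k f" "in_Hvk j g"
    using assms unfolding VH_def by blast
  then have "in_Hvk (max k j) f" "in_Hvk (max k j) g"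
    by (auto intro: in_Hvk_mono)
  then show ?thesis
    unfolding VH_def using in_Hvk_lincomb by blast
qed

lemma VH_diff: "f \<in> VH \<Longrightarrow> g \<in> VH \<Longrightarrow> (\<lambda>z. f z - g z) \<in> VH"
  using VH_lincomb[of f g 1 "-1"] by simp

lemma VH_scale: "f \<in> VH \<Longrightarrow> (\<lambda>z. c * f z) \<in> VH"
  using VH_lincomb[of f f c 0] by simp

lemma zero_in_VH: "(\<lambda>z. 0) \<in> VH"
  unfolding VH_def in_Hvk_def by (auto intro!: exI[of _ 0])

lemma VH_holomorphic: "f \<in> VH \<Longrightarrow> f holomorphic_on ball 0 1"
  unfolding VH_def in_Hvk_def by blast

lemma disc_affine_in_VH: "disc_affine a b \<in> VH"
proof -
  have "vw z ^ 0 * norm (a + b * z) \<le> norm a + norm b" if "z \<in> ball 0 1" for z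
    using that norm_triangle_ineq[of a "b * z"] mult_left_le[of "norm z" "norm b"]
    by (simp add: norm_mult)
  then have "in_Hvk 0 (disc_affine a b)"
    unfolding in_Hvk_def using disc_affine_holomorphic
    by (intro conjI exI[of _ "norm a + norm b"]) (auto simp: disc_affine_def)
  then show ?thesis
    unfolding VH_def by blast
qed

lemma norm_Hvk_upper:
  assumes "in_Hvk k f" "z \<in> ball 0 1"
  shows "vw z ^ k * norm (f z) \<le> norm_Hvk k f"
proof -
  obtain M where "\<forall>z\<in>ball 0 1. vw z ^ k * norm (f z) \<le> M"
    using assms(1) unfolding in_Hvk_def by blast
  then show ?thesis
    unfolding norm_Hvk_def by (intro cSUP_upper[OF assms(2)] bdd_aboveI2) auto
qed

lemma in_Hvk_radial_growth:
  assumes "in_Hvk k g"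
  shows "\<exists>M. \<forall>x. 1 - 1 / exp 1 < x \<and> x < 1 \<longrightarrow> norm (g (of_real x)) \<le> M * (- ln (1 - x)) ^ k"
proof -
  obtain M where M: "\<forall>z\<in>ball 0 1. vw z ^ k * norm (g z) \<le> M"
    using assms unfolding in_Hvk_def by blast
  have "norm (g (of_real x)) \<le> M * (- ln (1 - x)) ^ k" if x: "1 - 1 / exp 1 < x" "x < 1" for x
  proof -
    have "0 < 1 - 1 / exp (1 :: real)"
      by simp
    then have "0 \<le> x"
      using x by linarith
    define L where "L = - ln (1 - x)"
    have L: "1 < L"
      unfolding L_def using x by (rule neg_ln_gt_1)
    have "vw (of_real x) = 1 / L"
      using x \<open>0 \<le> x\<close> by (simp add: vw_def L_def)
    moreover have "vw (of_real x) ^ k * norm (g (of_real x)) \<le> M"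
      using M x \<open>0 \<le> x\<close> by simp
    ultimately have "norm (g (of_real x)) / L ^ k \<le> M"
      by (simp add: power_one_over)
    then show ?thesis
      using L by (simp add: L_def divide_le_eq mult.commute)
  qed
  then show ?thesis
    by blast
qed

section \<open>The inductive limit topology\<close>

lemma VH_cont_seminorm_triangle:
  "VH_cont_seminorm p \<Longrightarrow> f \<in> VH \<Longrightarrow> g \<in> VH \<Longrightarrow> p (\<lambda>z. f z + g z) \<le> p f + p g"
  unfolding VH_cont_seminorm_def by blast

lemma VH_cont_seminorm_scale:
  "VH_cont_seminorm p \<Longrightarrow> f \<in> VH \<Longrightarrow> p (\<lambda>z. c * f z) = norm c * p f"
  unfolding VH_cont_seminorm_def by blast

lemma VH_cont_seminorm_zero:
  assumes "VH_cont_seminorm p"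
  shows "p (\<lambda>z. 0) = 0"
  using VH_cont_seminorm_scale[OF assms zero_in_VH, of 0] by simp

lemma VH_cont_seminorm_nonneg:
  assumes p: "VH_cont_seminorm p" and f: "f \<in> VH"
  shows "0 \<le> p f"
proof -
  have "p (\<lambda>z. f z + (- 1) * f z) \<le> p f + p (\<lambda>z. (- 1) * f z)"
    using VH_cont_seminorm_triangle[OF p f VH_scale[OF f]] .
  also have "p (\<lambda>z. (- 1) * f z) = p f"
    using VH_cont_seminorm_scale[OF p f, of "- 1"] by simp
  finally show ?thesis
    using VH_cont_seminorm_zero[OF p] by simp
qed

lemma VH_cont_seminorm_add:
  assumes p: "VH_cont_seminorm p" and q: "VH_cont_seminorm q"
  shows "VH_cont_seminorm (\<lambda>f. p f + q f)"
  unfolding VH_cont_seminorm_def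
proof (intro conjI ballI allI)
  fix f g assume "f \<in> VH" "g \<in> VH"
  then have "p (\<lambda>z. f z + g z) \<le> p f + p g" "q (\<lambda>z. f z + g z) \<le> q f + q g"
    using p q by (auto intro: VH_cont_seminorm_triangle)
  then show "p (\<lambda>z. f z + g z) + q (\<lambda>z. f z + g z) \<le> p f + q f + (p g + q g)"
    by linarith
next
  fix f and c :: complex assume "f \<in> VH"
  then show "p (\<lambda>z. c * f z) + q (\<lambda>z. c * f z) = norm c * (p f + q f)"
    using p q by (simp add: VH_cont_seminorm_scale distrib_left)
next
  fix k
  obtain C D where "\<forall>f. in_Hvk k f \<longrightarrow> p f \<le> C * norm_Hvk k f"
    and "\<forall>f. in_Hvk k f \<longrightarrow> q f \<le> D * norm_Hvk k f"
    using p q unfolding VH_cont_seminorm_def by meson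
  then show "\<exists>C. \<forall>f. in_Hvk k f \<longrightarrow> p f + q f \<le> C * norm_Hvk k f"
    by (intro exI[of _ "C + D"]) (auto simp: distrib_right intro: add_mono)
qed

definition VH_open :: "(complex \<Rightarrow> complex) set \<Rightarrow> bool" where
  "VH_open U \<longleftrightarrow> U \<subseteq> VH \<and>
     (\<forall>x\<in>U. \<exists>p e. VH_cont_seminorm p \<and> e > 0 \<and> {y\<in>VH. p (\<lambda>z. y z - x z) < e} \<subseteq> U)"

lemma VH_open_Int:
  assumes S: "VH_open S" and T: "VH_open T"
  shows "VH_open (S \<inter> T)"
  unfolding VH_open_def
proof (intro conjI ballI)
  show "S \<inter> T \<subseteq> VH"
    using S unfolding VH_open_def by auto
  fix x assume x: "x \<in> S \<inter> T"
  obtain p e where p: "VH_cont_seminorm p" "e > 0" "{y\<in>VH. p (\<lambda>z. y z - x z) < e} \<subseteq> S"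
    using S x unfolding VH_open_def by blast
  obtain q d where q: "VH_cont_seminorm q" "d > 0" "{y\<in>VH. q (\<lambda>z. y z - x z) < d} \<subseteq> T"
    using T x unfolding VH_open_def by blast
  have xV: "x \<in> VH"
    using S x unfolding VH_open_def by auto
  have "{y\<in>VH. p (\<lambda>z. y z - x z) + q (\<lambda>z. y z - x z) < min e d} \<subseteq> S \<inter> T"
  proof
    fix y assume y: "y \<in> {y\<in>VH. p (\<lambda>z. y z - x z) + q (\<lambda>z. y z - x z) < min e d}"
    then have "(\<lambda>z. y z - x z) \<in> VH"
      using xV by (intro VH_diff) auto
    then have "0 \<le> p (\<lambda>z. y z - x z)" "0 \<le> q (\<lambda>z. y z - x z)"
      using VH_cont_seminorm_nonneg[OF p(1)] VH_cont_seminorm_nonneg[OF q(1)] by blast+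
    then show "y \<in> S \<inter> T"
      using y p(3) q(3) by auto
  qed
  then show "\<exists>p e. VH_cont_seminorm p \<and> e > 0 \<and> {y\<in>VH. p (\<lambda>z. y z - x z) < e} \<subseteq> S \<inter> T"
    using VH_cont_seminorm_add[OF p(1) q(1)] p(2) q(2)
    by (intro exI[of _ "\<lambda>f. p f + q f"] exI[of _ "min e d"]) auto
qed

lemma openin_VH_top: "openin VH_top = VH_open"
proof -
  have "VH_open (\<Union>K)" if K: "\<forall>U\<in>K. VH_open U" for K
    unfolding VH_open_def
  proof (intro conjI ballI)
    show "\<Union>K \<subseteq> VH"
      using K unfolding VH_open_def by blast
    fix x assume "x \<in> \<Union>K"
    then obtain U where U: "U \<in> K" "x \<in> U" by blast
    then obtain p e where "VH_cont_seminorm p" "e > 0" "{y\<in>VH. p (\<lambda>z. y z - x z) < e} \<subseteq> U"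
      using K unfolding VH_open_def by blast
    with U show "\<exists>p e. VH_cont_seminorm p \<and> e > 0 \<and> {y\<in>VH. p (\<lambda>z. y z - x z) < e} \<subseteq> \<Union>K"
      by blast
  qed
  then have "istopology VH_open"
    unfolding istopology_def by (simp add: VH_open_Int)
  then show ?thesis
    unfolding VH_top_def VH_open_def[abs_def] by (rule topology_inverse')
qed

lemma topspace_VH_top: "topspace VH_top = VH"
proof -
  have "VH_cont_seminorm (\<lambda>f. 0)"
    unfolding VH_cont_seminorm_def by (auto intro: exI[of _ 0])
  then have "openin VH_top VH"
    unfolding openin_VH_top VH_open_def by (intro conjI ballI subset_refl exI[of _ "\<lambda>f. 0"] exI[of _ 1]) auto
  moreover have "U \<subseteq> VH" if "openin VH_top U" for U
    using that by (simp add: openin_VH_top VH_open_def)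
  ultimately show ?thesis
    unfolding topspace_def by blast
qed

lemma openin_VH_top_seminorm_ball:
  assumes p: "VH_cont_seminorm p" and x: "x \<in> VH"
  shows "openin VH_top {y\<in>VH. p (\<lambda>z. y z - x z) < e}"
  unfolding openin_VH_top VH_open_def
proof (intro conjI ballI)
  fix y0 assume y0: "y0 \<in> {y\<in>VH. p (\<lambda>z. y z - x z) < e}"
  have "{y\<in>VH. p (\<lambda>z. y z - y0 z) < e - p (\<lambda>z. y0 z - x z)} \<subseteq> {y\<in>VH. p (\<lambda>z. y z - x z) < e}"
  proof
    fix y assume y: "y \<in> {y\<in>VH. p (\<lambda>z. y z - y0 z) < e - p (\<lambda>z. y0 z - x z)}"
    have "p (\<lambda>z. (y z - y0 z) + (y0 z - x z)) \<le> p (\<lambda>z. y z - y0 z) + p (\<lambda>z. y0 z - x z)"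
      using x y y0 by (intro VH_cont_seminorm_triangle[OF p] VH_diff) auto
    then show "y \<in> {y\<in>VH. p (\<lambda>z. y z - x z) < e}"
      using y by auto
  qed
  then show "\<exists>p' e'. VH_cont_seminorm p' \<and> e' > 0 \<and>
      {y\<in>VH. p' (\<lambda>z. y z - y0 z) < e'} \<subseteq> {y\<in>VH. p (\<lambda>z. y z - x z) < e}"
    using p y0 by (intro exI[of _ p] exI[of _ "e - p (\<lambda>z. y0 z - x z)"]) auto
qed auto

lemma limitin_VH_top_seminorm:
  assumes lim: "limitin VH_top F g sequentially" and p: "VH_cont_seminorm p" and "0 < e"
  shows "eventually (\<lambda>n. p (\<lambda>z. F n z - g z) < e) sequentially"
proof -
  define B where "B = {y\<in>VH. p (\<lambda>z. y z - g z) < e}"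
  have g: "g \<in> VH"
    using limitin_topspace[OF lim] by (simp add: topspace_VH_top)
  then have "openin VH_top B" "g \<in> B"
    unfolding B_def using openin_VH_top_seminorm_ball[OF p g] VH_cont_seminorm_zero[OF p] \<open>0 < e\<close>
    by auto
  then have "eventually (\<lambda>n. F n \<in> B) sequentially"
    using lim unfolding limitin_def by blast
  then show ?thesis
    by (rule eventually_mono) (simp add: B_def)
qed

lemma in_closure_of_VH_top_seminorm:
  assumes x: "x \<in> VH_top closure_of S" and p: "VH_cont_seminorm p" and "0 < e"
  obtains y where "y \<in> S" "p (\<lambda>z. y z - x z) < e"
proof -
  define B where "B = {y\<in>VH. p (\<lambda>z. y z - x z) < e}"
  have xV: "x \<in> VH"
    using closure_of_subset_topspace[of VH_top S] x by (auto simp: topspace_VH_top)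
  then have "openin VH_top B" "x \<in> B"
    unfolding B_def using openin_VH_top_seminorm_ball[OF p xV] VH_cont_seminorm_zero[OF p] \<open>0 < e\<close>
    by auto
  then obtain y where "y \<in> S" "y \<in> B"
    using x unfolding in_closure_of by blast
  then show ?thesis
    using that unfolding B_def by blast
qed

lemma power_bounded_VH_seminorm:
  assumes T: "power_bounded_VH T" and q: "VH_cont_seminorm q"
  obtains p e where "VH_cont_seminorm p" "0 < e"
    "\<And>f n. f \<in> VH \<Longrightarrow> p f < e \<Longrightarrow> (T ^^ n) f \<in> VH \<and> q ((T ^^ n) f) < 1"
proof -
  define V where "V = {y\<in>VH. q (\<lambda>z. y z - 0) < 1}"
  have "openin VH_top V \<and> (\<lambda>_. 0) \<in> V"
    unfolding V_def using openin_VH_top_seminorm_ball[OF q zero_in_VH] VH_cont_seminorm_zero[OF q] zero_in_VH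
    by auto
  then have "\<exists>U. openin VH_top U \<and> (\<lambda>_. 0) \<in> U \<and> (\<forall>n. \<forall>f\<in>U. (T ^^ n) f \<in> V)"
    using T unfolding power_bounded_VH_def by simp
  then obtain U where U: "openin VH_top U" "(\<lambda>_. 0) \<in> U" "\<And>n f. f \<in> U \<Longrightarrow> (T ^^ n) f \<in> V"
    by blast
  have UV: "VH_open U"
    using U(1) by (simp add: openin_VH_top)
  obtain p e where p: "VH_cont_seminorm p" "0 < e" and pU: "{y\<in>VH. p (\<lambda>z. y z - 0) < e} \<subseteq> U"
    using bspec[OF conjunct2[OF UV[unfolded VH_open_def]] U(2)] by auto
  show ?thesis
  proof (rule that[OF p])
    fix f n assume "f \<in> VH" "p f < e"
    then have "f \<in> U"
      using pU by auto
    then show "(T ^^ n) f \<in> VH \<and> q ((T ^^ n) f) < 1"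
      using U(3) unfolding V_def by auto
  qed
qed

section \<open>Continuous seminorms\<close>

lemma VH_cont_seminorm_eval:
  assumes w: "w \<in> ball 0 1"
  shows "VH_cont_seminorm (\<lambda>f. norm (f w))"
  unfolding VH_cont_seminorm_def
proof (intro conjI ballI allI impI)
  fix k
  have "norm (f w) \<le> 1 / vw w ^ k * norm_Hvk k f" if "in_Hvk k f" for f
    using norm_Hvk_upper[OF that w] vw_pos_le_1(1)[OF w] by (simp add: field_simps)
  then show "\<exists>C. \<forall>f. in_Hvk k f \<longrightarrow> norm (f w) \<le> C * norm_Hvk k f"
    by blast
qed (auto simp: norm_mult intro: norm_triangle_ineq)

lemma norm_0_le_norm_Hvk: "in_Hvk k f \<Longrightarrow> norm (f 0) \<le> norm_Hvk k f"
  using norm_Hvk_upper[of k f 0] by (simp add: vw_def)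

lemma norm_deriv_0_le_norm_Hvk:
  assumes f: "in_Hvk k f"
  shows "norm (deriv f 0) \<le> 2 * norm_Hvk k f"
proof -
  have hol: "f holomorphic_on ball 0 1"
    using f unfolding in_Hvk_def by blast
  have "norm ((deriv ^^ 1) f 0) \<le> fact 1 * norm_Hvk k f / (1 / 2) ^ 1"
  proof (rule Cauchy_inequality)
    show "f holomorphic_on ball 0 (1 / 2)"
      using hol by (rule holomorphic_on_subset) auto
    show "continuous_on (cball 0 (1 / 2)) f"
      using holomorphic_on_imp_continuous_on[OF hol] by (rule continuous_on_subset) auto
    fix x :: complex assume "norm (0 - x) = 1 / 2"
    then show "norm (f x) \<le> norm_Hvk k f"
      using norm_Hvk_upper[OF f, of x] vw_eq_1[of x] by simp
  qed auto
  then show ?thesis by simp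
qed

text \<open>Chosen because the Cesaro operator fixes \<open>g(0)\<close> and halves \<open>g(0) - g'(0)\<close>.\<close>
definition jet_seminorm :: "(complex \<Rightarrow> complex) \<Rightarrow> real" where
  "jet_seminorm g = norm (g 0) + norm (g 0 - deriv g 0)"

lemma VH_cont_seminorm_jet: "VH_cont_seminorm jet_seminorm"
  unfolding VH_cont_seminorm_def
proof (intro conjI ballI allI impI)
  fix f g assume "f \<in> VH" "g \<in> VH"
  then have f: "f field_differentiable at 0" and g: "g field_differentiable at 0"
    by (auto intro: holomorphic_on_imp_differentiable_at VH_holomorphic)
  have "jet_seminorm (\<lambda>z. f z + g z) = norm (f 0 + g 0) + norm ((f 0 - deriv f 0) + (g 0 - deriv g 0))"
    using f g by (simp add: jet_seminorm_def algebra_simps)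
  also have "\<dots> \<le> jet_seminorm f + jet_seminorm g"
    unfolding jet_seminorm_def
    using norm_triangle_ineq[of "f 0" "g 0"] norm_triangle_ineq[of "f 0 - deriv f 0" "g 0 - deriv g 0"]
    by simp
  finally show "jet_seminorm (\<lambda>z. f z + g z) \<le> jet_seminorm f + jet_seminorm g" .
next
  fix f and c :: complex assume "f \<in> VH"
  then have "f field_differentiable at 0"
    by (auto intro: holomorphic_on_imp_differentiable_at VH_holomorphic)
  then have "jet_seminorm (\<lambda>z. c * f z) = norm (c * f 0) + norm (c * (f 0 - deriv f 0))"
    by (simp add: jet_seminorm_def algebra_simps)
  then show "jet_seminorm (\<lambda>z. c * f z) = norm c * jet_seminorm f"
    by (simp add: jet_seminorm_def norm_mult distrib_left)
next
  fix k
  have "jet_seminorm f \<le> 4 * norm_Hvk k f" if f: "in_Hvk k f" for f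
    using norm_triangle_ineq4[of "f 0" "deriv f 0"] norm_0_le_norm_Hvk[OF f] norm_deriv_0_le_norm_Hvk[OF f]
    by (simp add: jet_seminorm_def)
  then show "\<exists>C. \<forall>f. in_Hvk k f \<longrightarrow> jet_seminorm f \<le> C * norm_Hvk k f"
    by blast
qed

lemma jet_seminorm_scaled_cesaro_iter_diff:
  assumes f: "f holomorphic_on ball 0 1" and g: "g holomorphic_on ball 0 1"
  shows "jet_seminorm (\<lambda>w. c * (cesaro ^^ n) f w - g w)
    = norm (c * f 0 - g 0) + norm (c * ((f 0 - deriv f 0) / 2 ^ n) - (g 0 - deriv g 0))"
proof -
  have "(cesaro ^^ n) f field_differentiable at 0" "g field_differentiable at 0"
    using holomorphic_on_imp_differentiable_at[OF cesaro_iter_holomorphic[OF f] open_ball]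
      holomorphic_on_imp_differentiable_at[OF g open_ball] by auto
  then have D: "deriv (\<lambda>w. c * (cesaro ^^ n) f w - g w) 0 = c * deriv ((cesaro ^^ n) f) 0 - deriv g 0"
    by (simp add: field_differentiable_mult field_differentiable_const)
  have "jet_seminorm (\<lambda>w. c * (cesaro ^^ n) f w - g w)
      = norm (c * f 0 - g 0) + norm (c * ((cesaro ^^ n) f 0 - deriv ((cesaro ^^ n) f) 0) - (g 0 - deriv g 0))"
    unfolding jet_seminorm_def D by (simp add: cesaro_iter_0 algebra_simps)
  then show ?thesis
    by (simp only: cesaro_iter_deriv_0[OF f])
qed

definition weighted_sup :: "(complex \<Rightarrow> real) \<Rightarrow> (complex \<Rightarrow> complex) \<Rightarrow> real" where
  "weighted_sup w g = (SUP z\<in>ball 0 1. w z * norm (g z))"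

locale rapid_weight =
  fixes w :: "complex \<Rightarrow> real"
  assumes nonneg: "\<And>z. z \<in> ball 0 1 \<Longrightarrow> 0 \<le> w z"
    and le_vw_power: "\<And>k. \<exists>C. \<forall>z\<in>ball 0 1. w z \<le> C * vw z ^ k"
begin

lemma weighted_le_norm_Hvk:
  "\<exists>C. \<forall>g. in_Hvk k g \<longrightarrow> (\<forall>z\<in>ball 0 1. w z * norm (g z) \<le> C * norm_Hvk k g)"
proof -
  obtain C where C: "\<forall>z\<in>ball 0 1. w z \<le> C * vw z ^ k"
    using le_vw_power by blast
  have "w 0 \<le> C * vw 0 ^ k"
    using C by simp
  moreover have "vw 0 = 1"
    by (simp add: vw_eq_1)
  ultimately have "0 \<le> C"
    using nonneg[of 0] by simp
  have "w z * norm (g z) \<le> C * norm_Hvk k g" if g: "in_Hvk k g" and z: "z \<in> ball 0 1" for g z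
  proof -
    have "w z * norm (g z) \<le> C * vw z ^ k * norm (g z)"
      using C z by (simp add: mult_right_mono)
    also have "\<dots> = C * (vw z ^ k * norm (g z))"
      by simp
    also have "\<dots> \<le> C * norm_Hvk k g"
      using norm_Hvk_upper[OF g z] \<open>0 \<le> C\<close> by (rule mult_left_mono)
    finally show ?thesis .
  qed
  then show ?thesis by blast
qed

lemma weighted_sup_upper:
  assumes "g \<in> VH" "z \<in> ball 0 1"
  shows "w z * norm (g z) \<le> weighted_sup w g"
proof -
  obtain k where "in_Hvk k g"
    using assms(1) unfolding VH_def by blast
  then obtain C where "\<forall>z\<in>ball 0 1. w z * norm (g z) \<le> C * norm_Hvk k g"
    using weighted_le_norm_Hvk[of k] by blast
  then show ?thesis
    unfolding weighted_sup_def by (intro cSUP_upper[OF assms(2)] bdd_aboveI2) auto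
qed

lemma weighted_sup_scale_le:
  assumes "g \<in> VH"
  shows "weighted_sup w (\<lambda>z. c * g z) \<le> norm c * weighted_sup w g"
  unfolding weighted_sup_def[of w "\<lambda>z. c * g z"]
proof (rule cSUP_least)
  fix z :: complex assume z: "z \<in> ball 0 1"
  have "w z * norm (c * g z) = norm c * (w z * norm (g z))"
    by (simp add: norm_mult)
  also have "\<dots> \<le> norm c * weighted_sup w g"
    by (rule mult_left_mono[OF weighted_sup_upper[OF assms z]]) simp
  finally show "w z * norm (c * g z) \<le> norm c * weighted_sup w g" .
qed simp

lemma VH_cont_seminorm_weighted_sup: "VH_cont_seminorm (weighted_sup w)"
  unfolding VH_cont_seminorm_def
proof (intro conjI ballI allI impI)
  fix f g assume f: "f \<in> VH" and g: "g \<in> VH"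
  show "weighted_sup w (\<lambda>z. f z + g z) \<le> weighted_sup w f + weighted_sup w g"
    unfolding weighted_sup_def[of w "\<lambda>z. f z + g z"]
  proof (rule cSUP_least)
    fix z :: complex assume z: "z \<in> ball 0 1"
    have "w z * norm (f z + g z) \<le> w z * norm (f z) + w z * norm (g z)"
      using nonneg[OF z] norm_triangle_ineq[of "f z" "g z"]
      by (metis distrib_left mult_left_mono)
    also have "\<dots> \<le> weighted_sup w f + weighted_sup w g"
      using weighted_sup_upper[OF f z] weighted_sup_upper[OF g z] by simp
    finally show "w z * norm (f z + g z) \<le> weighted_sup w f + weighted_sup w g" .
  qed simp
next
  fix f and c :: complex assume f: "f \<in> VH"
  show "weighted_sup w (\<lambda>z. c * f z) = norm c * weighted_sup w f"
  proof (cases "c = 0")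
    case True
    then show ?thesis by (simp add: weighted_sup_def)
  next
    case False
    have "(\<lambda>z. inverse c * (c * f z)) = f"
      using False by (simp add: field_simps)
    then have "weighted_sup w f \<le> norm (inverse c) * weighted_sup w (\<lambda>z. c * f z)"
      using weighted_sup_scale_le[OF VH_scale[OF f, of c], of "inverse c"] by simp
    then have "norm c * weighted_sup w f \<le> norm c * (norm (inverse c) * weighted_sup w (\<lambda>z. c * f z))"
      by (rule mult_left_mono) simp
    also have "\<dots> = weighted_sup w (\<lambda>z. c * f z)"
      using False by (simp add: norm_inverse)
    finally show ?thesis
      using weighted_sup_scale_le[OF f, of c] by simp
  qed
next
  fix k
  obtain C where C: "\<forall>g. in_Hvk k g \<longrightarrow> (\<forall>z\<in>ball 0 1. w z * norm (g z) \<le> C * norm_Hvk k g)"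
    using weighted_le_norm_Hvk by blast
  have "weighted_sup w f \<le> C * norm_Hvk k f" if "in_Hvk k f" for f
    unfolding weighted_sup_def using C that by (intro cSUP_least) auto
  then show "\<exists>C. \<forall>f. in_Hvk k f \<longrightarrow> weighted_sup w f \<le> C * norm_Hvk k f"
    by blast
qed

end

lemma dist_boundary_powr_le_vw_power:
  fixes a :: real
  assumes a: "0 < a" and z: "z \<in> ball 0 1"
  shows "(1 - norm z) powr a \<le> ((real k / a) ^ k + 1) * vw z ^ k"
proof (cases "norm z \<le> 1 - 1 / exp 1 \<or> k = 0")
  case True
  have "(1 - norm z) powr a \<le> 1"
    using z a by (intro powr_le1) auto
  moreover have "vw z ^ k = 1"
    using True by (auto simp: vw_def)
  moreover have "0 \<le> (real k / a) ^ k"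
    using a by simp
  ultimately show ?thesis by simp
next
  case False
  define t where "t = 1 - norm z"
  define L where "L = - ln t"
  have t: "0 < t" "t < 1"
    using z False unfolding t_def by auto
  have L: "1 < L"
    unfolding L_def t_def using z False by (intro neg_ln_gt_1) auto
  have vw: "vw z = 1 / L"
    using False by (simp add: vw_def L_def t_def)
  define y where "y = (1 / t) powr (a / k)"
  have "ln y < y"
    unfolding y_def using t by (intro ln_less_self) simp
  moreover have "ln y = a / k * L"
    unfolding y_def L_def using t by (simp add: ln_powr ln_div)
  ultimately have "a / k * L \<le> y"
    by simp
  then have "k / a * (a / k * L) \<le> k / a * y"
    using a by (intro mult_left_mono) auto
  moreover have "k / a * (a / k * L) = L"
    using a False by simp
  ultimately have "L \<le> k / a * y"
    by simp
  then have "L ^ k \<le> (k / a * y) ^ k"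
    using L by (intro power_mono) auto
  also have "\<dots> = (k / a) ^ k * y ^ k"
    by (rule power_mult_distrib)
  also have "y ^ k = (1 / t) powr a"
    unfolding y_def using t False by (simp add: powr_realpow[symmetric] powr_powr)
  finally have "t powr a * L ^ k \<le> t powr a * ((k / a) ^ k * (1 / t) powr a)"
    by (intro mult_left_mono) auto
  also have "\<dots> = (k / a) ^ k"
    using t by (simp add: powr_divide)
  finally have "t powr a \<le> (k / a) ^ k / L ^ k"
    using L by (subst pos_le_divide_eq) auto
  also have "\<dots> = (k / a) ^ k * vw z ^ k"
    by (simp add: vw power_one_over)
  also have "\<dots> \<le> ((k / a) ^ k + 1) * vw z ^ k"
    using vw L by (intro mult_right_mono) auto
  finally show ?thesis
    by (simp add: t_def)
qed

lemma rapid_weight_dist_boundary_powr: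
  assumes "0 < a"
  shows "rapid_weight (\<lambda>z. (1 - norm z) powr a)"
proof
  show "\<exists>C. \<forall>z\<in>ball 0 1. (1 - norm z) powr a \<le> C * vw z ^ k" for k
    using dist_boundary_powr_le_vw_power[OF assms] by blast
qed simp

section \<open>Orbits of the Cesaro operator\<close>

lemma weighted_sup_cesaro_iter_disc_const_ge:
  assumes c: "0 \<le> c" and g: "(cesaro ^^ n) (disc_const c) \<in> VH"
  shows "c * (4 / exp 1) ^ n \<le> weighted_sup (\<lambda>z. (1 - norm z) powr (1 / 4)) ((cesaro ^^ n) (disc_const c))"
proof -
  define x where "x = 1 - exp (- (4 * real n))"
  have x: "0 \<le> x" "x < 1"
    unfolding x_def by auto
  have "(fact n :: real) \<le> real n ^ n"
    using fact_le_power[of n] by simp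
  then have "c * 4 ^ n * fact n \<le> c * 4 ^ n * real n ^ n"
    using c by (intro mult_left_mono) auto
  then have "c * 4 ^ n \<le> c * (4 * real n) ^ n / fact n"
    by (simp add: le_divide_eq power_mult_distrib mult.assoc)
  also have "\<dots> \<le> Re ((cesaro ^^ n) (disc_const c) (of_real x))"
    using Re_cesaro_iter_disc_const_ge[OF c x, of n] by (simp add: x_def)
  also have "\<dots> \<le> norm ((cesaro ^^ n) (disc_const c) (of_real x))"
    by (rule complex_Re_le_cmod)
  finally have "exp (- real n) * (c * 4 ^ n) \<le> (1 - norm (complex_of_real x)) powr (1 / 4) *
      norm ((cesaro ^^ n) (disc_const c) (of_real x))"
    using x by (simp add: x_def exp_powr_real mult_left_mono del: of_real_diff)
  also have "\<dots> \<le> weighted_sup (\<lambda>z. (1 - norm z) powr (1 / 4)) ((cesaro ^^ n) (disc_const c))"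
    using x by (intro rapid_weight.weighted_sup_upper[OF rapid_weight_dist_boundary_powr g]) auto
  finally show ?thesis
    by (simp add: power_divide exp_of_nat_mult[symmetric] exp_minus field_simps)
qed

lemma not_power_bounded_cesaro: "\<not> power_bounded_VH cesaro"
proof
  let ?w = "\<lambda>z. (1 - norm z) powr (1 / 4)"
  interpret rapid_weight ?w
    by (rule rapid_weight_dist_boundary_powr) simp
  assume "power_bounded_VH cesaro"
  then obtain p e where p: "VH_cont_seminorm p" and "0 < e"
    and orbit: "\<And>f n. f \<in> VH \<Longrightarrow> p f < e \<Longrightarrow> (cesaro ^^ n) f \<in> VH \<and> weighted_sup ?w ((cesaro ^^ n) f) < 1"
    using power_bounded_VH_seminorm[OF _ VH_cont_seminorm_weighted_sup] by blast
  define c where "c = e / (p (disc_const 1) + 1)"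
  have "0 \<le> p (disc_const 1)"
    using VH_cont_seminorm_nonneg[OF p disc_affine_in_VH] .
  then have c: "0 < c" "c * p (disc_const 1) < e"
    unfolding c_def using \<open>0 < e\<close> by (auto simp: field_simps)
  have "disc_const c = (\<lambda>z. of_real c * disc_const 1 z)"
    by (auto simp: disc_affine_def)
  then have "p (disc_const c) < e"
    using c VH_cont_seminorm_scale[OF p disc_affine_in_VH, of "of_real c"] by simp
  then have small: "c * (4 / exp 1) ^ n < 1" for n
    using orbit[OF disc_affine_in_VH] weighted_sup_cesaro_iter_disc_const_ge[of c n] c(1)
    by (meson less_eq_real_def order_le_less_trans)
  have "1 < 4 / exp (1 :: real)"
    using exp_le by simp
  then obtain n where "1 / c < (4 / exp 1) ^ n"
    using real_arch_pow by blast
  then have "1 < c * (4 / exp 1) ^ n"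
    using c(1) by (simp add: divide_less_eq mult.commute)
  with small[of n] show False
    by linarith
qed

lemma power_Suc_div_fact_gt:
  fixes L M :: real
  assumes L: "1 \<le> L" and large: "2 * fact (Suc k) * (\<bar>M\<bar> + 1) < L"
  shows "M * L ^ k + 1 < L ^ Suc k / fact (Suc k) / 2"
proof -
  have Lk: "1 \<le> L ^ k"
    using L by simp
  have "\<bar>M\<bar> + 1 < L / (2 * fact (Suc k))"
    using large by (subst pos_less_divide_eq) (auto simp: mult.commute)
  then have "L ^ k * (\<bar>M\<bar> + 1) < L ^ k * (L / (2 * fact (Suc k)))"
    using Lk by (intro mult_strict_left_mono) auto
  moreover have "M * L ^ k \<le> \<bar>M\<bar> * L ^ k"
    using Lk by (intro mult_right_mono) auto
  moreover have "L ^ k * (\<bar>M\<bar> + 1) = \<bar>M\<bar> * L ^ k + L ^ k"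
    by (simp add: algebra_simps)
  moreover have "L ^ Suc k / fact (Suc k) / 2 = L ^ k * (L / (2 * fact (Suc k)))"
    by (simp add: mult.commute)
  ultimately show ?thesis
    using Lk by linarith
qed

lemma not_mean_ergodic_cesaro: "\<not> mean_ergodic_VH cesaro"
proof
  assume "mean_ergodic_VH cesaro"
  then obtain g where lim: "limitin VH_top (\<lambda>n. cesaro_mean cesaro n (disc_const 1)) g sequentially"
    unfolding mean_ergodic_VH_def using disc_affine_in_VH by blast
  then have "g \<in> VH"
    using limitin_topspace topspace_VH_top by metis
  then obtain k where "in_Hvk k g"
    unfolding VH_def by blast
  then obtain M where M: "\<And>x. 1 - 1 / exp 1 < x \<Longrightarrow> x < 1 \<Longrightarrow> norm (g (of_real x)) \<le> M * (- ln (1 - x)) ^ k"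
    using in_Hvk_radial_growth by blast
  define L where "L = 2 * fact (Suc k) * (\<bar>M\<bar> + 1) + 1"
  define x where "x = 1 - exp (- L)"
  have L: "1 < L" and lnx: "- ln (1 - x) = L"
    unfolding L_def x_def by auto
  have x: "1 - 1 / exp 1 < x" "x < 1"
    using L by (auto simp: x_def exp_minus field_simps)
  have "0 \<le> x"
    using L by (simp add: x_def)
  have "eventually (\<lambda>n. norm (cesaro_mean cesaro n (disc_const 1) (of_real x) - g (of_real x)) < 1) sequentially"
    using limitin_VH_top_seminorm[OF lim VH_cont_seminorm_eval] x \<open>0 \<le> x\<close> by simp
  moreover have "eventually (\<lambda>n. 2 * Suc k \<le> n) sequentially"
    by (rule eventually_ge_at_top)
  ultimately have "eventually (\<lambda>n. norm (cesaro_mean cesaro n (disc_const 1) (of_real x) - g (of_real x)) < 1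
      \<and> 2 * Suc k \<le> n) sequentially"
    by (rule eventually_conj)
  then obtain n where n: "norm (cesaro_mean cesaro n (disc_const 1) (of_real x) - g (of_real x)) < 1"
    and "2 * Suc k \<le> n"
    using eventually_happens'[OF sequentially_bot] by blast
  have "L ^ Suc k / fact (Suc k) / 2 \<le> Re (cesaro_mean cesaro n (disc_const 1) (of_real x))"
    using Re_cesaro_mean_disc_const_ge[OF \<open>0 \<le> x\<close> x(2) _ \<open>2 * Suc k \<le> n\<close>] lnx by simp
  also have "\<dots> \<le> norm (g (of_real x)) + 1"
    using n complex_Re_le_cmod[of "cesaro_mean cesaro n (disc_const 1) (of_real x)"]
      norm_triangle_ineq2[of "cesaro_mean cesaro n (disc_const 1) (of_real x)" "g (of_real x)"]
    by linarith
  also have "\<dots> \<le> M * L ^ k + 1"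
    using M[OF x] lnx by simp
  finally show False
    using power_Suc_div_fact_gt[of L k M] L by (simp add: L_def)
qed

lemma jet_approx_by_scaled_cesaro_orbit:
  assumes z0: "z0 \<in> VH" and f: "f holomorphic_on ball 0 1" and "0 < e"
    and f_cl: "f \<in> VH_top closure_of {(\<lambda>w. c * (cesaro ^^ n) z0 w) | c n. (c::complex) \<in> UNIV \<and> (n::nat) \<in> UNIV}"
  shows "\<exists>c n. norm (c * z0 0 - f 0) + norm (c * ((z0 0 - deriv z0 0) / 2 ^ n) - (f 0 - deriv f 0)) < e"
proof -
  obtain y where "y \<in> {(\<lambda>w. c * (cesaro ^^ n) z0 w) | c n. (c::complex) \<in> UNIV \<and> (n::nat) \<in> UNIV}"
    and y: "jet_seminorm (\<lambda>w. y w - f w) < e"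
    using f_cl by (rule in_closure_of_VH_top_seminorm[OF _ VH_cont_seminorm_jet \<open>0 < e\<close>])
  then obtain c n where "y = (\<lambda>w. c * (cesaro ^^ n) z0 w)"
    by blast
  with y show ?thesis
    using jet_seminorm_scaled_cesaro_iter_diff[OF VH_holomorphic[OF z0] f] by auto
qed

lemma not_supercyclic_cesaro: "\<not> supercyclic_VH cesaro"
proof
  assume "supercyclic_VH cesaro"
  then obtain z0 where z0: "z0 \<in> VH"
    and dense: "VH_top closure_of {(\<lambda>w. c * (cesaro ^^ n) z0 w) | c n. (c::complex) \<in> UNIV \<and> (n::nat) \<in> UNIV} = VH"
    unfolding supercyclic_VH_def by blast
  define a where "a = z0 0"
  define \<beta> where "\<beta> = z0 0 - deriv z0 0"
  \<comment> \<open>The target \<open>1 + (1 - R) z\<close> has jet \<open>(1, R)\<close>.  Matching the first coordinate forces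
    \<open>|c| < 3 / (2 |a|)\<close>, which keeps the second coordinate of \<open>c C\<^sup>n z0\<close> below \<open>R - 1\<close>.\<close>
  define R where "R = 3 * norm \<beta> / (2 * norm a) + 1"
  have "disc_affine 1 (1 - of_real R) 0 = 1"
    by (simp add: disc_affine_def)
  then obtain c n where close: "norm (c * a - 1) + norm (c * (\<beta> / 2 ^ n) - of_real R) < 1 / 2"
    using jet_approx_by_scaled_cesaro_orbit[OF z0 disc_affine_holomorphic, of "1 / 2" 1 "1 - of_real R"]
      dense disc_affine_in_VH
    by (auto simp: deriv_disc_affine_0 a_def \<beta>_def)
  then have "norm (c * a - 1) < 1 / 2"
    using norm_ge_zero[of "c * (\<beta> / 2 ^ n) - of_real R"] by linarith
  then have "1 / 2 < norm c * norm a" "norm c * norm a < 3 / 2"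
    using norm_triangle_ineq2[of 1 "c * a"] norm_triangle_ineq2[of "c * a" 1]
    by (auto simp: norm_mult norm_minus_commute)
  then have "norm c < 3 / (2 * norm a)"
    by (cases "a = 0") (auto simp: field_simps)
  have "norm (c * (\<beta> / 2 ^ n)) = norm c * norm \<beta> / 2 ^ n"
    by (simp add: norm_mult norm_divide norm_power)
  also have "\<dots> \<le> norm c * norm \<beta>"
    using divide_left_mono[of 1 "2 ^ n" "norm c * norm \<beta>"] by simp
  also have "\<dots> \<le> 3 / (2 * norm a) * norm \<beta>"
    using \<open>norm c < 3 / (2 * norm a)\<close> by (intro mult_right_mono) auto
  finally have bounded: "norm (c * (\<beta> / 2 ^ n)) \<le> R - 1"
    by (simp add: R_def)
  have "0 \<le> R"
    unfolding R_def by simp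
  then have "R - norm (c * (\<beta> / 2 ^ n)) \<le> norm (c * (\<beta> / 2 ^ n) - of_real R)"
    using norm_triangle_ineq2[of "of_real R" "c * (\<beta> / 2 ^ n)"] by (simp add: norm_minus_commute)
  with bounded close show False
    using norm_ge_zero[of "c * a - 1"] by linarith
qed

theorem proposition2p6:
  shows "\<not> power_bounded_VH cesaro \<and> \<not> mean_ergodic_VH cesaro \<and> \<not> supercyclic_VH cesaro"
  using not_power_bounded_cesaro not_mean_ergodic_cesaro not_supercyclic_cesaro by blast

end
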